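(* Let $\mathbb{F}_q$ be a finite field and let $z_1,\dots,z_n$ be indeterminates. For $k=1,\dots,n$ let $$f_k=\prod_{(\alpha_1,\dots,\alpha_{k-1})\in\mathbb{F}_q^{k-1}}\bigl(z_k+\alpha_{k-1}z_{k-1}+\cdots+\alpha_1z_1\bigr)\in\mathbb{F}_q[z_1,\dots,z_n]$$ (so $f_1=z_1$). Then for each $k=1,\dots,n$, the differential $df_k=\sum_{l=1}^n\frac{\partial f_k}{\partial z_l}dz_l$ is divisible by $\prod_{i<k}f_i^{\,q-2}$, i.e. every partial derivative $\frac{\partial f_k}{\partial z_l}$ is divisible by $\prod_{i<k}f_i^{\,q-2}$.
   Context: The $f_k$ are the basic invariants of the group of lower triangular unipotent matrices $\mathrm{U}_n(\mathbb{F}_q)$ acting on $V=\mathbb{F}_q^n$ with $z_1,\dots,z_n$ the dual basis of $V^*$. *)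

theory Defs
  imports Main "HOL-Library.Poly_Mapping"
begin

text \<open>Multivariate polynomials over 'a in the variables z_1, z_2, ... (indexed by nat):
  a polynomial is a finitely supported map from monomials (exponent vectors
  finitely supported nat to nat maps) to coefficients.\<close>

type_synonym 'a mpoly = "((nat, nat) poly_mapping, 'a) poly_mapping"

definition mvar :: "nat \<Rightarrow> 'a::comm_ring_1 mpoly" where
  "mvar i = Poly_Mapping.single (Poly_Mapping.single i 1) 1"

definition mconst :: "'a::comm_ring_1 \<Rightarrow> 'a mpoly" where
  "mconst c = Poly_Mapping.single 0 c"

definition mpderiv :: "nat \<Rightarrow> 'a::comm_ring_1 mpoly \<Rightarrow> 'a mpoly" where
  "mpderiv l p = (\<Sum>m\<in>Poly_Mapping.keys p.
      Poly_Mapping.single (m - Poly_Mapping.single l 1)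
        (of_nat (Poly_Mapping.lookup m l) * Poly_Mapping.lookup p m))"

definition fk :: "'a::{field,finite} itself \<Rightarrow> nat \<Rightarrow> 'a mpoly" where
  "fk _ k = (\<Prod>\<alpha>\<in>{\<alpha> :: nat \<Rightarrow> 'a. \<forall>i. i \<notin> {1..<k} \<longrightarrow> \<alpha> i = 0}.
      mvar k + (\<Sum>i\<in>{1..<k}. mconst (\<alpha> i) * mvar i))"

end

theory Submission
  imports Defs "HOL-Computational_Algebra.Polynomial" "HOL-Library.Cardinality"
begin

text \<open>
  Write V_k(X) for the product of X + v over all v in the F_q-span of z_1, ..., z_(k-1), so
  that f_k = V_k(z_k). Splitting off the coefficient of z_k and using
  \<Prod>_(c \<in> F_q) (A + c B) = A^q - B^(q-1) A, the homogenized form of \<Prod>_c (x + c) = x^q - x,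
  gives V_(k+1)(X) = V_k(X)^q - f_k^(q-1) V_k(X); by induction every V_k is F_q-linear.
  Since q = 0 in F_q the q-th power has zero derivative, so
  \<partial>V_(k+1)(X) = -f_k^(q-2) ((q-1) V_k(X) \<partial>f_k + f_k \<partial>V_k(X)), and induction on k with
  X = z_j shows that \<Prod>_(i<k) f_i^(q-2) divides every \<partial>V_k(z_j).
\<close>

lemma card_field_ge_2: "2 \<le> card (UNIV :: 'a::{field,finite} set)"
proof -
  have "card {0::'a, 1} \<le> CARD('a)" by (rule card_mono) auto
  then show ?thesis by simp
qed

lemma field_power_card_eq:
  fixes x :: "'a::{field,finite}"
  shows "x ^ CARD('a) = x"
proof (cases "x = 0")
  case True
  then show ?thesis using finite_UNIV_card_ge_0[where 'a='a] by simp
next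
  case False
  let ?U = "UNIV - {0::'a}"
  have image: "(*) x ` ?U = ?U"
  proof (intro equalityI subsetI)
    fix y assume "y \<in> ?U"
    then show "y \<in> (*) x ` ?U" using False by (intro image_eqI[of y _ "y / x"]) auto
  qed (use False in auto)
  have "inj_on ((*) x) ?U" using False by (auto intro: inj_onI)
  from prod.reindex[OF this, of "\<lambda>y. y"] have "(\<Prod>y\<in>?U. y) = (\<Prod>y\<in>?U. x * y)"
    unfolding image by (simp add: comp_def)
  also have "\<dots> = x ^ card ?U * (\<Prod>y\<in>?U. y)"
    by (simp add: prod.distrib)
  finally have "1 * (\<Prod>y\<in>?U. y) = x ^ card ?U * (\<Prod>y\<in>?U. y)"
    by (simp only: mult_1)
  then have "x ^ card ?U = 1"
    by (simp only: mult_cancel_right) simp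
  moreover have "CARD('a) = Suc (card ?U)"
    using card_Suc_Diff1[of UNIV "0::'a"] by simp
  ultimately show ?thesis by (simp only: power_Suc mult_1_right)
qed

lemma of_nat_card_field: "(of_nat CARD('a) :: 'a::{field,finite}) = 0"
proof -
  have "(\<Sum>x\<in>UNIV. x + (1::'a)) = (\<Sum>x\<in>UNIV. x)"
    by (rule sum.reindex_bij_witness[of _ "\<lambda>y. y - 1" "\<lambda>y. y + 1"]) auto
  then show ?thesis by (simp add: sum.distrib)
qed

lemma prod_linear_factors_field:
  "(\<Prod>c\<in>UNIV. [:c, 1:]) = monom 1 CARD('a) - monom (1::'a::{field,finite}) 1"
proof (rule poly_eqI_degree_lead_coeff[where A = UNIV and n = "CARD('a)"])
  have deg: "degree (\<Prod>c\<in>UNIV. [:c, 1::'a:]) = CARD('a)"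
    by (subst degree_prod_eq_sum_degree) auto
  show "coeff (\<Prod>c\<in>UNIV. [:c, 1:]) CARD('a) = coeff (monom 1 CARD('a) - monom (1::'a) 1) CARD('a)"
    using deg lead_coeff_prod[of "\<lambda>c. [:c, 1::'a:]" UNIV] card_field_ge_2[where 'a='a] by simp
  show "degree (\<Prod>c\<in>UNIV. [:c, 1::'a:]) \<le> CARD('a)" using deg by simp
  show "degree (monom 1 CARD('a) - monom (1::'a) 1) \<le> CARD('a)"
    by (rule degree_diff_le) (use card_field_ge_2[where 'a='a] in \<open>simp_all add: degree_monom_eq\<close>)
  fix z :: 'a
  have "poly (\<Prod>c\<in>UNIV. [:c, 1:]) z = (\<Prod>c\<in>UNIV. c + z)" by (simp add: poly_prod)
  also have "\<dots> = 0" by (rule prod_zero) (auto intro: exI[of _ "-z"])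
  finally show "poly (\<Prod>c\<in>UNIV. [:c, 1:]) z = poly (monom 1 CARD('a) - monom 1 1) z"
    by (simp add: poly_monom field_power_card_eq)
qed simp

lemma linear_power_card_field: "[:1, 1::'a::{field,finite}:] ^ CARD('a) = monom 1 CARD('a) + 1"
proof (rule poly_eqI_degree_lead_coeff[where A = UNIV and n = "CARD('a)"])
  show "coeff ([:1, 1::'a:] ^ CARD('a)) CARD('a) = coeff (monom 1 CARD('a) + 1) CARD('a)"
    using card_field_ge_2[where 'a='a] by (simp add: coeff_linear_power)
  show "degree ([:1, 1::'a:] ^ CARD('a)) \<le> CARD('a)" by (simp add: degree_linear_power)
  show "degree (monom 1 CARD('a) + (1::'a poly)) \<le> CARD('a)"
    by (rule degree_add_le) (simp_all add: degree_monom_le)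
  fix z :: 'a
  show "poly ([:1, 1:] ^ CARD('a)) z = poly (monom 1 CARD('a) + 1) z"
    by (simp add: poly_monom field_power_card_eq add.commute)
qed simp

lemma mconst_add: "mconst (a + b) = (mconst a + mconst b :: 'a::comm_ring_1 mpoly)"
  by (simp add: mconst_def single_add)

lemma mconst_mult: "mconst (a * b) = (mconst a * mconst b :: 'a::comm_ring_1 mpoly)"
  by (simp add: mconst_def mult_single)

lemma mconst_diff: "mconst (a - b) = (mconst a - mconst b :: 'a::comm_ring_1 mpoly)"
  by (simp add: mconst_def single_diff)

lemma mconst_0 [simp]: "mconst 0 = (0::'a::comm_ring_1 mpoly)"
  by (simp add: mconst_def)

lemma mconst_1 [simp]: "mconst 1 = (1::'a::comm_ring_1 mpoly)"
  by (simp add: mconst_def)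

lemma mconst_power: "mconst (a ^ n) = (mconst a ^ n :: 'a::comm_ring_1 mpoly)"
  by (induct n) (simp_all add: mconst_mult)

lemma mconst_of_nat: "mconst (of_nat n) = (of_nat n :: 'a::comm_ring_1 mpoly)"
  by (simp add: mconst_def)

lemma of_nat_card_mpoly: "(of_nat CARD('a) :: 'a::{field,finite} mpoly) = 0"
  by (simp flip: mconst_of_nat add: of_nat_card_field)

section \<open>Homogeneous evaluation of univariate polynomials\<close>

text \<open>\<open>homog_eval d p A B\<close> evaluates the degree-d homogenization B^d p(A/B) of \<open>p\<close>.\<close>

definition homog_eval :: "nat \<Rightarrow> 'a::comm_ring_1 poly \<Rightarrow> 'a mpoly \<Rightarrow> 'a mpoly \<Rightarrow> 'a mpoly" where
  "homog_eval d p A B = (\<Sum>i\<le>d. mconst (coeff p i) * A ^ i * B ^ (d - i))"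

lemma homog_eval_add: "homog_eval d (p + r) A B = homog_eval d p A B + homog_eval d r A B"
  by (simp add: homog_eval_def mconst_add algebra_simps sum.distrib)

lemma homog_eval_diff: "homog_eval d (p - r) A B = homog_eval d p A B - homog_eval d r A B"
  by (simp add: homog_eval_def mconst_diff algebra_simps sum_subtractf)

lemma homog_eval_monom:
  assumes "i \<le> d"
  shows "homog_eval d (monom c i) A B = mconst c * A ^ i * B ^ (d - i)"
proof -
  have "homog_eval d (monom c i) A B = (\<Sum>j\<le>d. if i = j then mconst c * A ^ i * B ^ (d - i) else 0)"
    unfolding homog_eval_def by (rule sum.cong) auto
  then show ?thesis using assms by simp
qed

lemma homog_eval_mult_linear:
  assumes "degree p \<le> d"
  shows "homog_eval (Suc d) (p * [:c, 1:]) A B = homog_eval d p A B * (A + mconst c * B)"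
proof -
  have "homog_eval (Suc d) (smult c p) A B
      = (\<Sum>i\<le>d. mconst c * mconst (coeff p i) * A ^ i * B ^ (Suc d - i))"
    using assms by (simp add: homog_eval_def mconst_mult coeff_eq_0)
  also have "\<dots> = mconst c * B * homog_eval d p A B"
    unfolding homog_eval_def sum_distrib_left
    by (rule sum.cong) (auto simp: Suc_diff_le algebra_simps)
  finally have smult: "homog_eval (Suc d) (smult c p) A B = mconst c * B * homog_eval d p A B" .
  have "homog_eval (Suc d) (pCons 0 p) A B = (\<Sum>i\<le>d. mconst (coeff p i) * A ^ Suc i * B ^ (d - i))"
    unfolding homog_eval_def by (subst sum.atMost_Suc_shift) simp
  also have "\<dots> = A * homog_eval d p A B"
    by (simp add: homog_eval_def sum_distrib_left algebra_simps)
  finally have shift: "homog_eval (Suc d) (pCons 0 p) A B = A * homog_eval d p A B" .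
  have "p * [:c, 1:] = smult c p + pCons 0 p" by simp
  then show ?thesis by (simp add: homog_eval_add smult shift algebra_simps)
qed

lemma homog_eval_prod_linear:
  fixes A B :: "'a::field mpoly"
  assumes "finite S"
  shows "homog_eval (card S) (\<Prod>c\<in>S. [:c, 1:]) A B = (\<Prod>c\<in>S. A + mconst c * B)"
  using assms
proof (induction S rule: finite_induct)
  case empty
  then show ?case by (simp add: homog_eval_def)
next
  case (insert x S)
  have "degree (\<Prod>c\<in>S. [:c, 1::'a:]) \<le> card S"
    by (subst degree_prod_eq_sum_degree) auto
  from homog_eval_mult_linear[OF this] show ?case
    using insert by (simp add: mult.commute)
qed

lemma homog_eval_linear_power:
  fixes A B :: "'a::field mpoly"
  shows "homog_eval n ([:1, 1:] ^ n) A B = (A + B) ^ n"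
proof (induction n)
  case 0
  then show ?case by (simp add: homog_eval_def)
next
  case (Suc n)
  have "degree ([:1, 1::'a:] ^ n) \<le> n" by (simp add: degree_linear_power)
  from homog_eval_mult_linear[OF this, of 1 A B] show ?case
    using Suc by (simp add: mult.commute power_Suc2)
qed

lemma prod_add_mconst_mult:
  fixes A B :: "'a::{field,finite} mpoly"
  shows "(\<Prod>c\<in>UNIV. A + mconst c * B) = A ^ CARD('a) - B ^ (CARD('a) - 1) * A"
proof -
  have "(\<Prod>c\<in>UNIV. A + mconst c * B) = homog_eval CARD('a) (monom 1 CARD('a) - monom 1 1) A B"
    using homog_eval_prod_linear[of "UNIV::'a set" A B] by (simp add: prod_linear_factors_field)
  also have "\<dots> = A ^ CARD('a) - B ^ (CARD('a) - 1) * A"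
    using card_field_ge_2[where 'a='a] by (simp add: homog_eval_diff homog_eval_monom mult.commute)
  finally show ?thesis .
qed

lemma add_power_card_mpoly:
  fixes A B :: "'a::{field,finite} mpoly"
  shows "(A + B) ^ CARD('a) = A ^ CARD('a) + B ^ CARD('a)"
proof -
  have "(A + B) ^ CARD('a) = homog_eval CARD('a) (monom 1 CARD('a) + monom 1 0) A B"
    using homog_eval_linear_power[of "CARD('a)" A B]
    by (simp add: linear_power_card_field monom_0 one_pCons)
  also have "\<dots> = A ^ CARD('a) + B ^ CARD('a)"
    unfolding homog_eval_add homog_eval_monom[OF order.refl] homog_eval_monom[OF le0] by simp
  finally show ?thesis .
qed

section \<open>Partial derivatives\<close>

lemma mpderiv_eq_sum_superset:
  assumes "finite S" "Poly_Mapping.keys p \<subseteq> S"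
  shows "mpderiv l p = (\<Sum>m\<in>S. Poly_Mapping.single (m - Poly_Mapping.single l 1)
           (of_nat (Poly_Mapping.lookup m l) * Poly_Mapping.lookup p m))"
  unfolding mpderiv_def
  by (rule sum.mono_neutral_left) (use assms in \<open>auto simp: in_keys_iff\<close>)

lemma mpderiv_add: "mpderiv l (p + r) = mpderiv l p + mpderiv l (r :: 'a::comm_ring_1 mpoly)"
proof -
  let ?S = "Poly_Mapping.keys p \<union> Poly_Mapping.keys r"
  have "finite ?S" by simp
  moreover have "Poly_Mapping.keys (p + r) \<subseteq> ?S" by (rule keys_add)
  ultimately show ?thesis
    using mpderiv_eq_sum_superset[of ?S p l] mpderiv_eq_sum_superset[of ?S r l]
      mpderiv_eq_sum_superset[of ?S "p + r" l]
    by (simp add: lookup_add algebra_simps single_add sum.distrib)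
qed

lemma mpderiv_0 [simp]: "mpderiv l 0 = 0"
  by (simp add: mpderiv_def)

lemma mpderiv_sum: "mpderiv l (\<Sum>i\<in>I. f i) = (\<Sum>i\<in>I. mpderiv l (f i :: 'a::comm_ring_1 mpoly))"
  by (induction I rule: infinite_finite_induct) (auto simp: mpderiv_add)

lemma mpderiv_uminus: "mpderiv l (- p) = - mpderiv l (p :: 'a::comm_ring_1 mpoly)"
  using mpderiv_add[of l "- p" p] by (simp add: eq_neg_iff_add_eq_0)

lemma mpderiv_diff: "mpderiv l (p - r) = mpderiv l p - mpderiv l (r :: 'a::comm_ring_1 mpoly)"
  using mpderiv_add[of l p "- r"] by (simp add: mpderiv_uminus)

lemma mpderiv_single:
  "mpderiv l (Poly_Mapping.single m (c::'a::comm_ring_1)) =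
     Poly_Mapping.single (m - Poly_Mapping.single l 1) (of_nat (Poly_Mapping.lookup m l) * c)"
  by (subst mpderiv_eq_sum_superset[of "{m}"]) auto

lemma sum_single_lookup: "(\<Sum>m\<in>Poly_Mapping.keys p. Poly_Mapping.single m (Poly_Mapping.lookup p m)) = p"
  by (rule poly_mapping_eqI) (simp add: lookup_sum lookup_single when_def in_keys_iff)

text \<open>When z_l does not occur in \<open>m\<close> the coefficient vanishes, so the truncated subtraction
  of monomials never matters.\<close>

lemma single_mpderiv_shift:
  "Poly_Mapping.single (m - Poly_Mapping.single l 1 + n) (of_nat (Poly_Mapping.lookup m l) * c) =
   Poly_Mapping.single (m + n - Poly_Mapping.single l 1) (of_nat (Poly_Mapping.lookup m l) * (c::'a::comm_ring_1))"
proof (cases "Poly_Mapping.lookup m l = 0")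
  case False
  have "m - Poly_Mapping.single l 1 + n = m + n - Poly_Mapping.single l 1"
    by (rule poly_mapping_eqI) (use False in \<open>auto simp: lookup_add lookup_minus lookup_single when_def\<close>)
  then show ?thesis by simp
qed simp

lemma mpderiv_mult_single:
  "mpderiv l (Poly_Mapping.single m a * Poly_Mapping.single n b) =
   mpderiv l (Poly_Mapping.single m a) * Poly_Mapping.single n b
     + Poly_Mapping.single m a * mpderiv l (Poly_Mapping.single n (b::'a::comm_ring_1))"
proof -
  let ?e = "m + n - Poly_Mapping.single l 1"
  have "mpderiv l (Poly_Mapping.single m a) * Poly_Mapping.single n b
      = Poly_Mapping.single (m - Poly_Mapping.single l 1 + n) (of_nat (Poly_Mapping.lookup m l) * (a * b))"
    by (simp add: mpderiv_single mult_single mult.assoc)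
  also have "\<dots> = Poly_Mapping.single ?e (of_nat (Poly_Mapping.lookup m l) * (a * b))"
    by (rule single_mpderiv_shift)
  finally have left: "mpderiv l (Poly_Mapping.single m a) * Poly_Mapping.single n b = \<dots>" .
  have "Poly_Mapping.single m a * mpderiv l (Poly_Mapping.single n b)
      = Poly_Mapping.single (n - Poly_Mapping.single l 1 + m) (of_nat (Poly_Mapping.lookup n l) * (a * b))"
    by (simp add: mpderiv_single mult_single algebra_simps)
  also have "\<dots> = Poly_Mapping.single ?e (of_nat (Poly_Mapping.lookup n l) * (a * b))"
    by (subst single_mpderiv_shift) (simp add: add.commute)
  finally have right: "Poly_Mapping.single m a * mpderiv l (Poly_Mapping.single n b) = \<dots>" .
  show ?thesis
    unfolding left right
    by (simp only: mult_single mpderiv_single lookup_add of_nat_add distrib_right single_add)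
qed

lemma mpderiv_mult_single_left:
  "mpderiv l (Poly_Mapping.single m a * r) =
   mpderiv l (Poly_Mapping.single m a) * r + Poly_Mapping.single m a * mpderiv l (r::'a::comm_ring_1 mpoly)"
proof -
  let ?E = "\<lambda>n. Poly_Mapping.single n (Poly_Mapping.lookup r n)"
  have "mpderiv l (Poly_Mapping.single m a * (\<Sum>n\<in>Poly_Mapping.keys r. ?E n))
     = mpderiv l (Poly_Mapping.single m a) * (\<Sum>n\<in>Poly_Mapping.keys r. ?E n)
       + Poly_Mapping.single m a * mpderiv l (\<Sum>n\<in>Poly_Mapping.keys r. ?E n)"
    by (simp add: sum_distrib_left mpderiv_sum mpderiv_mult_single sum.distrib)
  then show ?thesis by (simp only: sum_single_lookup)
qed

lemma mpderiv_mult: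
  "mpderiv l (p * r) = mpderiv l p * r + p * mpderiv l (r::'a::comm_ring_1 mpoly)"
proof -
  let ?E = "\<lambda>n. Poly_Mapping.single n (Poly_Mapping.lookup p n)"
  have "mpderiv l ((\<Sum>n\<in>Poly_Mapping.keys p. ?E n) * r)
     = mpderiv l (\<Sum>n\<in>Poly_Mapping.keys p. ?E n) * r
       + (\<Sum>n\<in>Poly_Mapping.keys p. ?E n) * mpderiv l r"
    by (simp add: sum_distrib_right mpderiv_sum mpderiv_mult_single_left sum.distrib)
  then show ?thesis by (simp only: sum_single_lookup)
qed

lemma mpderiv_power:
  "mpderiv l (p ^ Suc n) = of_nat (Suc n) * p ^ n * mpderiv l (p::'a::comm_ring_1 mpoly)"
proof (induction n)
  case (Suc n)
  have "mpderiv l (p ^ Suc (Suc n)) = mpderiv l p * p ^ Suc n + p * mpderiv l (p ^ Suc n)"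
    by (simp add: mpderiv_mult)
  also have "\<dots> = of_nat (Suc (Suc n)) * p ^ Suc n * mpderiv l p"
    unfolding Suc.IH by (simp add: algebra_simps)
  finally show ?case .
qed simp

lemma mpderiv_power_card:
  "mpderiv l (p ^ CARD('a)) = (0 :: 'a::{field,finite} mpoly)"
proof -
  have "CARD('a) = Suc (CARD('a) - 1)" using card_field_ge_2[where 'a='a] by simp
  then show ?thesis
    by (metis mpderiv_power of_nat_card_mpoly mult_zero_left)
qed

section \<open>Products over a span of variables\<close>

text \<open>\<open>span_poly k X\<close> is V_k(X); the coefficient tuples in F_q^(k-1) are encoded, as in
  \<open>fk\<close>, by functions vanishing outside \<open>{1..<k}\<close>.\<close>

definition span_coeffs :: "nat \<Rightarrow> (nat \<Rightarrow> 'a::zero) set" where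
  "span_coeffs k = {\<alpha>. \<forall>i. i \<notin> {1..<k} \<longrightarrow> \<alpha> i = 0}"

definition span_poly :: "nat \<Rightarrow> 'a::{field,finite} mpoly \<Rightarrow> 'a mpoly" where
  "span_poly k X = (\<Prod>\<alpha>\<in>span_coeffs k. X + (\<Sum>i\<in>{1..<k}. mconst (\<alpha> i) * mvar i))"

lemma fk_eq_span_poly: "fk TYPE('a::{field,finite}) k = span_poly k (mvar k)"
  by (simp add: fk_def span_poly_def span_coeffs_def)

lemma span_poly_1 [simp]: "span_poly (Suc 0) X = X"
proof -
  have "span_coeffs (Suc 0) = {\<lambda>_. 0::'a}" by (auto simp: span_coeffs_def)
  then show ?thesis by (simp add: span_poly_def)
qed

lemma span_coeffs_Suc:
  assumes "1 \<le> k"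
  shows "span_coeffs (Suc k) = (\<lambda>(\<beta>, c). \<beta>(k := c)) ` (span_coeffs k \<times> (UNIV :: 'a::zero set))"
proof (intro equalityI subsetI)
  fix \<alpha> :: "nat \<Rightarrow> 'a" assume "\<alpha> \<in> span_coeffs (Suc k)"
  then have "\<alpha>(k := 0) \<in> span_coeffs k" by (auto simp: span_coeffs_def)
  then show "\<alpha> \<in> (\<lambda>(\<beta>, c). \<beta>(k := c)) ` (span_coeffs k \<times> UNIV)"
    by (intro image_eqI[where x = "(\<alpha>(k := 0), \<alpha> k)"]) auto
qed (use assms in \<open>auto simp: span_coeffs_def\<close>)

lemma inj_on_fun_upd_span_coeffs:
  "inj_on (\<lambda>(\<beta>, c). \<beta>(k := c)) (span_coeffs k \<times> (UNIV :: 'a::zero set))"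
proof (rule inj_onI, clarify)
  fix \<beta> \<beta>' :: "nat \<Rightarrow> 'a" and c c'
  assume "\<beta> \<in> span_coeffs k" "\<beta>' \<in> span_coeffs k" and eq: "\<beta>(k := c) = \<beta>'(k := c')"
  have "\<beta> i = \<beta>' i" for i
    using fun_cong[OF eq, of i] \<open>\<beta> \<in> span_coeffs k\<close> \<open>\<beta>' \<in> span_coeffs k\<close>
    by (cases "i = k") (auto simp: span_coeffs_def)
  then show "\<beta> = \<beta>' \<and> c = c'" using fun_cong[OF eq, of k] by auto
qed

lemma span_poly_Suc_eq_prod:
  assumes "1 \<le> k"
  shows "span_poly (Suc k) X = (\<Prod>c\<in>UNIV. span_poly k (X + mconst c * mvar k))"
proof -
  let ?L = "\<lambda>\<beta>. \<Sum>i\<in>{1..<k}. mconst (\<beta> i) * mvar i"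
  have "{1..<Suc k} = insert k {1..<k}" using assms by auto
  then have summand: "X + (\<Sum>i\<in>{1..<Suc k}. mconst ((\<beta>(k := c)) i) * mvar i)
      = (X + mconst c * mvar k) + ?L \<beta>" for \<beta> :: "nat \<Rightarrow> 'a" and c
    by (simp add: algebra_simps)
  have "span_poly (Suc k) X = (\<Prod>(\<beta>, c)\<in>span_coeffs k \<times> UNIV.
      X + (\<Sum>i\<in>{1..<Suc k}. mconst ((\<beta>(k := c)) i) * mvar i))"
    unfolding span_poly_def span_coeffs_Suc[OF assms] prod.reindex[OF inj_on_fun_upd_span_coeffs]
    by (simp only: comp_def case_prod_unfold)
  also have "\<dots> = (\<Prod>(\<beta>, c)\<in>span_coeffs k \<times> UNIV. (X + mconst c * mvar k) + ?L \<beta>)"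
    by (simp only: summand)
  also have "\<dots> = (\<Prod>c\<in>UNIV. \<Prod>\<beta>\<in>span_coeffs k. (X + mconst c * mvar k) + ?L \<beta>)"
    by (simp only: prod.cartesian_product[symmetric] prod.swap[of _ _ UNIV])
  finally show ?thesis by (simp only: span_poly_def)
qed

lemma span_poly_Suc_if_linear:
  assumes "1 \<le> k"
    and add: "\<And>X Y. span_poly k (X + Y) = span_poly k X + span_poly k (Y :: 'a::{field,finite} mpoly)"
    and scale: "\<And>c X. span_poly k (mconst c * X) = mconst c * span_poly k (X :: 'a mpoly)"
  shows "span_poly (Suc k) X =
    span_poly k X ^ CARD('a) - span_poly k (mvar k) ^ (CARD('a) - 1) * span_poly k (X :: 'a mpoly)"
  by (simp add: span_poly_Suc_eq_prod[OF assms(1)] add scale prod_add_mconst_mult)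

lemma span_poly_linear:
  assumes "1 \<le> k"
  shows "span_poly k (X + Y) = span_poly k X + span_poly k (Y :: 'a::{field,finite} mpoly)"
    and "span_poly k (mconst c * X) = mconst c * span_poly k X"
proof -
  have "(\<forall>X Y. span_poly k (X + Y) = span_poly k X + span_poly k (Y :: 'a mpoly)) \<and>
        (\<forall>c X. span_poly k (mconst c * X) = mconst c * span_poly k (X :: 'a mpoly))"
    using assms
  proof (induction k rule: dec_induct)
    case (step k)
    let ?q = "CARD('a)"
    have rec: "span_poly (Suc k) X = span_poly k X ^ ?q - span_poly k (mvar k) ^ (?q - 1) * span_poly k X"
      for X :: "'a mpoly"
      using step by (intro span_poly_Suc_if_linear) auto
    have add: "span_poly k (X + Y) = span_poly k X + span_poly k Y" for X Y :: "'a mpoly"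
      using step.IH by blast
    have scale: "span_poly k (mconst c * X) = mconst c * span_poly k X" for c and X :: "'a mpoly"
      using step.IH by blast
    have "span_poly (Suc k) (mconst c * X) = mconst c * span_poly (Suc k) X" for c and X :: "'a mpoly"
    proof -
      have "(mconst c * span_poly k X) ^ ?q = mconst c * span_poly k X ^ ?q"
        by (simp add: power_mult_distrib field_power_card_eq flip: mconst_power)
      then show ?thesis by (simp only: rec scale) (simp add: algebra_simps)
    qed
    moreover have "span_poly (Suc k) (X + Y) = span_poly (Suc k) X + span_poly (Suc k) Y"
      for X Y :: "'a mpoly"
      by (simp only: rec add add_power_card_mpoly) (simp add: algebra_simps)
    ultimately show ?case by blast
  qed simp
  then show "span_poly k (X + Y) = span_poly k X + span_poly k Y"
    and "span_poly k (mconst c * X) = mconst c * span_poly k X"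
    by blast+
qed

lemma span_poly_Suc:
  assumes "1 \<le> k"
  shows "span_poly (Suc k) X =
    span_poly k X ^ CARD('a) - span_poly k (mvar k) ^ (CARD('a) - 1) * span_poly k (X :: 'a::{field,finite} mpoly)"
  using assms by (intro span_poly_Suc_if_linear span_poly_linear)

section \<open>Divisibility of the derivatives\<close>

lemma mpderiv_span_poly_Suc:
  fixes X :: "'a::{field,finite} mpoly"
  assumes "1 \<le> k"
  defines "C \<equiv> span_poly k (mvar k)"
  shows "mpderiv l (span_poly (Suc k) X) = - (C ^ (CARD('a) - 2) *
    (of_nat (CARD('a) - 1) * span_poly k X * mpderiv l C + C * mpderiv l (span_poly k X)))"
proof -
  let ?q = "CARD('a)" and ?Y = "span_poly k X"
  have q: "?q - 1 = Suc (?q - 2)" using card_field_ge_2[where 'a='a] by simp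
  have "mpderiv l (C ^ (?q - 1) * ?Y) = of_nat (?q - 1) * C ^ (?q - 2) * mpderiv l C * ?Y
      + C ^ (?q - 2) * C * mpderiv l ?Y"
    unfolding mpderiv_mult q mpderiv_power by (simp add: mult.commute)
  then show ?thesis
    by (simp add: span_poly_Suc[OF assms(1)] C_def mpderiv_diff mpderiv_power_card algebra_simps)
qed

lemma prod_fk_power_dvd_mpderiv_span_poly:
  assumes "1 \<le> k"
  shows "(\<Prod>i\<in>{1..<k}. fk TYPE('a) i ^ (CARD('a) - 2))
    dvd mpderiv l (span_poly k (mvar j) :: 'a::{field,finite} mpoly)"
  using assms
proof (induction k arbitrary: j rule: dec_induct)
  case (step k)
  let ?C = "span_poly k (mvar k) :: 'a mpoly"
  let ?P = "\<Prod>i\<in>{1..<k}. fk TYPE('a) i ^ (CARD('a) - 2)"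
  have "{1..<Suc k} = insert k {1..<k}" using step.hyps by auto
  then have prod_Suc: "(\<Prod>i\<in>{1..<Suc k}. fk TYPE('a) i ^ (CARD('a) - 2)) = ?C ^ (CARD('a) - 2) * ?P"
    by (simp add: fk_eq_span_poly)
  obtain u where "mpderiv l (span_poly k (mvar j)) = ?P * u" using step.IH by blast
  moreover obtain w where "mpderiv l ?C = ?P * w" using step.IH by blast
  ultimately have "mpderiv l (span_poly (Suc k) (mvar j)) = ?C ^ (CARD('a) - 2) * ?P *
      - (of_nat (CARD('a) - 1) * span_poly k (mvar j) * w + ?C * u)"
    by (simp add: mpderiv_span_poly_Suc[OF step.hyps(1)] algebra_simps)
  then show ?case unfolding prod_Suc by (rule dvdI)
qed simp

theorem lemma6p7:
  fixes n k l :: nat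
  assumes "k \<in> {1..n}" and "l \<in> {1..n}"
  shows "(\<Prod>i\<in>{1..<k}. fk TYPE('a::{field,finite}) i ^ (card (UNIV :: 'a set) - 2))
           dvd mpderiv l (fk TYPE('a) k)"
proof -
  have "1 \<le> k" using assms(1) by simp
  then show ?thesis
    unfolding fk_eq_span_poly[of k] by (rule prod_fk_power_dvd_mpderiv_span_poly)
qed

end
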